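(* Let $\varrho=\{\varrho_{t,T}\}_{t\in[0,T]}$ be a dynamic risk measure which is stochastically conditionally time-consistent, normalized, and translation invariant. Then for every $0\le t\le r\le T$ and every history $\xi_{[0,t]}\in\Xi_{0,t}$ there exists a functional $\varsigma^{\xi_{[0,t]}}_{t,r}:\mathcal L_\infty(\Xi^{\xi_t}_{t,r},P^{\xi_t}_{t,r})\to\mathbb R$, law invariant with respect to $P^{\xi_t}_{t,r}$ (i.e. its value at a random variable depends only on the distribution of that random variable under $P^{\xi_t}_{t,r}$), such that for every $c\in\mathcal L_\infty([0,T]\times\mathcal X)$ and $f\in\mathcal L_\infty(\mathcal X)$ the random variable $Z_T=\int_0^T c_\tau(X_\tau)\,d\tau+f(X_T)$ satisfies \[ \varrho_{t,T}(Z_T)(\xi_{[0,t]})=\int_0^t c_\tau(\xi_\tau)\,d\tau+\varsigma^{\xi_{[0,t]}}_{t,r}\Big(I^{\xi_t}_{t,r}(c)+\varrho_{r,T}\big(I^{X^{t,\xi_t}_r}_{r,T}(c)+f(X^{t,\xi_t}_T)\big)\Big), \] where the argument of $\varsigma^{\xi_{[0,t]}}_{t,r}$ is the random variable on $(\Xi^{\xi_t}_{t,r},P^{\xi_t}_{t,r})$ obtained by evaluating $\int_t^r c_\tau(X_\tau)\,d\tau+\varrho_{r,T}\big(\int_r^T c_\tau(X_\tau)\,d\tau+f(X_T)\big)$ along paths whose restriction to $[0,t]$ is $\xi_{[0,t]}$.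
   Context: Let $\mathcal X$ be a finite state space, $T>0$, and $\{X_t\}_{0\le t\le T}$ a continuous-time Markov chain with values in $\mathcal X$, starting at a fixed state $x_0$, with transition function $Q_{t,r}(y|x)=P(X_r=y\mid X_t=x)$. The transition rates $G_t(y|x)=\lim_{\tau\downarrow0}\frac1\tau[Q_{t,t+\tau}(y|x)-\delta_x(y)]$ are assumed to exist, be finite and be uniformly bounded over $t\in[0,T]$. For $0\le t<r\le T$ and $\xi\in\mathcal X$, $\Xi^{\xi}_{t,r}$ denotes the space of piecewise-constant right-continuous paths $[t,r]\to\mathcal X$ starting at $\xi$, $P^{\xi}_{t,r}$ the law on it of the chain started at $\xi$ at time $t$, $X^{t,\xi}=\{X^{t,\xi}_\tau\}$ a process with this law, and $\Xi_{0,t}=\bigcup_{\xi}\Xi^{\xi}_{0,t}$. $\{\mathcal F_t\}$ is the filtration generated by $X$, and $\mathcal Z_t$ is the space of bounded $\mathcal F_t$-measurable random variables, identified with measurable functionals of the path $\xi_{[0,t]}$. $\mathcal L_\infty([t,r]\times\mathcal X)$ is the space of measurable essentially bounded $c:[t,r]\times\mathcal X\to\mathbb R$, $\mathcal L_\infty(\mathcal X)$ the space of functions $\mathcal X\to\mathbb R$. For $c$ and $\xi_t\in\mathcal X$, $I^{\xi_t}_{t,r}(c)=\int_t^r c_\tau(X^{t,\xi_t}_\tau)\,d\tau$. A conditional risk measure is a mapping $\varrho_{t,T}:\mathcal Z_T\to\mathcal Z_t$; a dynamic risk measure is a family $\{\varrho_{t,T}\}_{t\in[0,T]}$. It is normalized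 if $\varrho_{t,T}(0)=0$; translation invariant if $\varrho_{t,T}(Z_t+Z_T)=Z_t+\varrho_{t,T}(Z_T)$ for all $Z_t\in\mathcal Z_t,Z_T\in\mathcal Z_T$. For a history $\xi_{[0,t]}$ and $r\in[t,T]$, $\varrho_{r,T}(Z_T)\mid\xi_{[0,t]}$ denotes $\varrho_{r,T}(Z_T)$ regarded as a function of the path on $[t,r]$ continuing $\xi_{[0,t]}$, with distribution induced by $P^{\xi_t}_{t,r}$; $\varrho_{t,T}(Z_T)(\xi_{[0,t]})$ is the value at the history. $U\preceq_{\rm st}V$ means $P(U>\eta)\le P(V>\eta)$ for all $\eta\in\mathbb R$. $\varrho$ is stochastically conditionally time-consistent if for all $0\le t\le r\le T$, all $\xi_{[0,t]}$ and all $Z_T,W_T\in\mathcal Z_T$, $\varrho_{r,T}(Z_T)\mid\xi_{[0,t]}\preceq_{\rm st}\varrho_{r,T}(W_T)\mid\xi_{[0,t]}$ implies $\varrho_{t,T}(Z_T)(\xi_{[0,t]})\le\varrho_{t,T}(W_T)(\xi_{[0,t]})$. *)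

theory Defs
  imports "HOL-Probability.Probability"
begin

text \<open>A path on [a,b] is a function real => state that is extended constantly
outside [a,b] (so it is determined by its values on [a,b]), and is piecewise
constant and right-continuous on [a,b]: there is a finite set S of jump times
such that the path is constant on every interval [tau1,tau2] inside [a,b)
that contains no point of S in (tau1,tau2].\<close>

definition clamp :: "real \<Rightarrow> real \<Rightarrow> real \<Rightarrow> real" where
  "clamp a b s = max a (min b s)"

definition restr :: "real \<Rightarrow> real \<Rightarrow> (real \<Rightarrow> 'x) \<Rightarrow> (real \<Rightarrow> 'x)" where
  "restr a b \<omega> = (\<lambda>s. \<omega> (clamp a b s))"

definition paths :: "real \<Rightarrow> real \<Rightarrow> (real \<Rightarrow> 'x) set" where
  "paths a b = {\<omega>. (\<forall>s. \<omega> s = \<omega> (clamp a b s)) \<and>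
      (\<exists>S::real set. finite S \<and>
         (\<forall>\<tau>1 \<tau>2. a \<le> \<tau>1 \<and> \<tau>1 \<le> \<tau>2 \<and> \<tau>2 < b \<and> {\<tau>1<..\<tau>2} \<inter> S = {} \<longrightarrow> \<omega> \<tau>1 = \<omega> \<tau>2))}"

definition paths_from :: "real \<Rightarrow> real \<Rightarrow> 'x \<Rightarrow> (real \<Rightarrow> 'x) set" where
  "paths_from a b \<xi> = {\<omega> \<in> paths a b. \<omega> a = \<xi>}"

definition path_meas :: "real \<Rightarrow> real \<Rightarrow> (real \<Rightarrow> 'x) measure" where
  "path_meas a b = sigma (paths a b)
     {{\<omega> \<in> paths a b. \<omega> \<tau> = y} | \<tau> y. \<tau> \<in> {a..b}}"

definition path_meas_from :: "real \<Rightarrow> real \<Rightarrow> 'x \<Rightarrow> (real \<Rightarrow> 'x) measure" where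
  "path_meas_from a b \<xi> = sigma (paths_from a b \<xi>)
     {{\<omega> \<in> paths_from a b \<xi>. \<omega> \<tau> = y} | \<tau> y. \<tau> \<in> {a..b}}"

definition path_concat :: "real \<Rightarrow> (real \<Rightarrow> 'x) \<Rightarrow> (real \<Rightarrow> 'x) \<Rightarrow> (real \<Rightarrow> 'x)" where
  "path_concat t \<xi> \<eta> = (\<lambda>s. if s \<le> t then \<xi> s else \<eta> s)"

definition path_int :: "(real \<Rightarrow> 'x \<Rightarrow> real) \<Rightarrow> real \<Rightarrow> real \<Rightarrow> (real \<Rightarrow> 'x) \<Rightarrow> real" where
  "path_int c a b \<omega> = set_lebesgue_integral lborel {a..b} (\<lambda>\<tau>. c \<tau> (\<omega> \<tau>))"

text \<open>Finite-dimensional distributions built from the transition function: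
Q s s' y x = P(X_{s'} = y | X_s = x).\<close>
fun fdd :: "(real \<Rightarrow> real \<Rightarrow> 'x \<Rightarrow> 'x \<Rightarrow> real) \<Rightarrow> real \<Rightarrow> 'x \<Rightarrow> real list \<Rightarrow> 'x list \<Rightarrow> real" where
  "fdd Q s x [] [] = 1"
| "fdd Q s x (s' # ss) (y # ys) = Q s s' y x * fdd Q s' y ss ys"
| "fdd Q s x _ _ = 0"

text \<open>P t r xi is the law P^xi_{t,r} on Xi^xi_{t,r} of the chain started at xi at
time t, with transition function Q; G are the transition rates, which exist,
are finite and are uniformly bounded.\<close>
definition markov_chain_laws ::
  "real \<Rightarrow> (real \<Rightarrow> real \<Rightarrow> 'x \<Rightarrow> 'x \<Rightarrow> real) \<Rightarrow> (real \<Rightarrow> 'x \<Rightarrow> 'x \<Rightarrow> real)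
     \<Rightarrow> (real \<Rightarrow> real \<Rightarrow> 'x \<Rightarrow> (real \<Rightarrow> 'x) measure) \<Rightarrow> bool" where
  "markov_chain_laws T Q G P \<longleftrightarrow>
     (\<forall>t r \<xi>. 0 \<le> t \<and> t \<le> r \<and> r \<le> T \<longrightarrow>
        prob_space (P t r \<xi>) \<and>
        space (P t r \<xi>) = paths_from t r \<xi> \<and>
        sets (P t r \<xi>) = sets (path_meas_from t r \<xi>) \<and>
        (\<forall>ss ys. sorted ss \<and> set ss \<subseteq> {t..r} \<and> length ss = length ys \<longrightarrow>
           measure (P t r \<xi>) {\<omega> \<in> space (P t r \<xi>). list_all2 (\<lambda>s y. \<omega> s = y) ss ys}
             = fdd Q t \<xi> ss ys)) \<and>
     (\<forall>t \<in> {0..<T}. \<forall>x y.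
        ((\<lambda>\<tau>. (Q t (t + \<tau>) y x - (if x = y then 1 else 0)) / \<tau>) \<longlongrightarrow> G t y x) (at_right 0)) \<and>
     (\<exists>K. \<forall>t \<in> {0..<T}. \<forall>x y. \<bar>G t y x\<bar> \<le> K)"

definition Zsp :: "real \<Rightarrow> ((real \<Rightarrow> 'x) \<Rightarrow> real) set" where
  "Zsp t = {Z. Z \<in> borel_measurable (path_meas 0 t) \<and> (\<exists>B. \<forall>\<omega> \<in> paths 0 t. \<bar>Z \<omega>\<bar> \<le> B)}"

text \<open>A dynamic risk measure: for each t, a mapping Z_T -> Z_t (elements of Z_T
being functionals on Xi_{0,T}, the result depends only on them).\<close>
definition dynamic_risk_measure ::
  "real \<Rightarrow> (real \<Rightarrow> ((real \<Rightarrow> 'x) \<Rightarrow> real) \<Rightarrow> ((real \<Rightarrow> 'x) \<Rightarrow> real)) \<Rightarrow> bool" where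
  "dynamic_risk_measure T \<rho> \<longleftrightarrow>
     (\<forall>t \<in> {0..T}. \<forall>Z \<in> Zsp T. \<rho> t Z \<in> Zsp t) \<and>
     (\<forall>t \<in> {0..T}. \<forall>Z \<in> Zsp T. \<forall>W \<in> Zsp T.
        (\<forall>\<omega> \<in> paths 0 T. Z \<omega> = W \<omega>) \<longrightarrow> (\<forall>\<omega> \<in> paths 0 t. \<rho> t Z \<omega> = \<rho> t W \<omega>))"

definition normalized ::
  "real \<Rightarrow> (real \<Rightarrow> ((real \<Rightarrow> 'x) \<Rightarrow> real) \<Rightarrow> ((real \<Rightarrow> 'x) \<Rightarrow> real)) \<Rightarrow> bool" where
  "normalized T \<rho> \<longleftrightarrow> (\<forall>t \<in> {0..T}. \<forall>\<omega> \<in> paths 0 t. \<rho> t (\<lambda>_. 0) \<omega> = 0)"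

text \<open>Z_t in Z_t is regarded as an element of Z_T via the restriction of the path to [0,t].\<close>
definition translation_invariant ::
  "real \<Rightarrow> (real \<Rightarrow> ((real \<Rightarrow> 'x) \<Rightarrow> real) \<Rightarrow> ((real \<Rightarrow> 'x) \<Rightarrow> real)) \<Rightarrow> bool" where
  "translation_invariant T \<rho> \<longleftrightarrow>
     (\<forall>t \<in> {0..T}. \<forall>Zt \<in> Zsp t. \<forall>Z \<in> Zsp T. \<forall>\<omega> \<in> paths 0 t.
        \<rho> t (\<lambda>\<omega>'. Zt (restr 0 t \<omega>') + Z \<omega>') \<omega> = Zt \<omega> + \<rho> t Z \<omega>)"

definition stoch_le :: "'a measure \<Rightarrow> ('a \<Rightarrow> real) \<Rightarrow> ('a \<Rightarrow> real) \<Rightarrow> bool" where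
  "stoch_le M U V \<longleftrightarrow>
     (\<forall>e. measure M {x \<in> space M. U x > e} \<le> measure M {x \<in> space M. V x > e})"

definition stoch_cond_time_consistent ::
  "real \<Rightarrow> (real \<Rightarrow> real \<Rightarrow> 'x \<Rightarrow> (real \<Rightarrow> 'x) measure)
     \<Rightarrow> (real \<Rightarrow> ((real \<Rightarrow> 'x) \<Rightarrow> real) \<Rightarrow> ((real \<Rightarrow> 'x) \<Rightarrow> real)) \<Rightarrow> bool" where
  "stoch_cond_time_consistent T P \<rho> \<longleftrightarrow>
     (\<forall>t r. 0 \<le> t \<and> t \<le> r \<and> r \<le> T \<longrightarrow>
       (\<forall>\<xi> \<in> paths 0 t. \<forall>Z \<in> Zsp T. \<forall>W \<in> Zsp T.
          stoch_le (P t r (\<xi> t)) (\<lambda>\<eta>. \<rho> r Z (path_concat t \<xi> \<eta>)) (\<lambda>\<eta>. \<rho> r W (path_concat t \<xi> \<eta>))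
          \<longrightarrow> \<rho> t Z \<xi> \<le> \<rho> t W \<xi>))"

definition Linf :: "'a measure \<Rightarrow> ('a \<Rightarrow> real) set" where
  "Linf M = {V. V \<in> borel_measurable M \<and> (\<exists>B. AE x in M. \<bar>V x\<bar> \<le> B)}"

definition law_invariant :: "'a measure \<Rightarrow> (('a \<Rightarrow> real) \<Rightarrow> real) \<Rightarrow> bool" where
  "law_invariant M \<sigma> \<longleftrightarrow>
     (\<forall>V \<in> Linf M. \<forall>W \<in> Linf M. distr M borel V = distr M borel W \<longrightarrow> \<sigma> V = \<sigma> W)"

definition Linf_ts :: "real \<Rightarrow> real \<Rightarrow> (real \<Rightarrow> 'x \<Rightarrow> real) set" where
  "Linf_ts a b = {c. (\<lambda>(\<tau>, x). c \<tau> x) \<in> borel_measurable (restrict_space borel {a..b} \<Otimes>\<^sub>M count_space UNIV)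
      \<and> (\<exists>B. \<forall>x. AE \<tau> in lborel. \<tau> \<in> {a..b} \<longrightarrow> \<bar>c \<tau> x\<bar> \<le> B)}"

end

theory Submission
  imports Defs
begin

text \<open>Let Z be the accumulated cost plus the terminal cost. Translation invariance splits
  \<rho>(r, Z) along a path into the cost already incurred on [0, r] and \<rho> at time r of the
  cost still to come; so, after subtracting the known cost a on [0, t], the random variable in the
  theorem is \<rho>(r, Z - a) evaluated along the continuations \<eta> of the history \<xi>.
  Stochastic conditional time consistency, used in both directions, shows that \<rho>(t, W)(\<xi>)
  depends on W only through the law of \<rho>(r, W) given \<xi>. Hence \<sigma>(V) := \<rho>(t, W)(\<xi>), for any W
  whose conditional risk at time r has the law of V, is well defined and law invariant, and its
  value at the random variable above is \<rho>(t, Z)(\<xi>) - a.\<close>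

section \<open>Paths\<close>

lemma paths_locally_constant_right:
  assumes "\<omega> \<in> paths a b" "a \<le> \<tau>" "\<tau> < b"
  obtains \<delta> where "0 < \<delta>" "\<And>s. \<tau> \<le> s \<Longrightarrow> s < \<tau> + \<delta> \<Longrightarrow> \<omega> s = \<omega> \<tau>"
proof -
  obtain S :: "real set" where S: "finite S"
    "\<And>\<tau>1 \<tau>2. a \<le> \<tau>1 \<Longrightarrow> \<tau>1 \<le> \<tau>2 \<Longrightarrow> \<tau>2 < b \<Longrightarrow> {\<tau>1<..\<tau>2} \<inter> S = {} \<Longrightarrow> \<omega> \<tau>1 = \<omega> \<tau>2"
    using assms(1) unfolding paths_def by blast
  \<comment> \<open>\<delta> is the distance from \<tau> to the next jump of \<omega> (or to b)\<close>
  define \<delta> where "\<delta> = Min (insert (b - \<tau>) ((\<lambda>s. s - \<tau>) ` {s\<in>S. \<tau> < s}))"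
  have \<delta>: "0 < \<delta>" "\<delta> \<le> b - \<tau>" using S(1) assms(3) by (auto simp: \<delta>_def)
  have \<delta>_jump: "\<tau> + \<delta> \<le> s" if "s \<in> S" "\<tau> < s" for s
  proof -
    have "\<delta> \<le> s - \<tau>" unfolding \<delta>_def using S(1) that by (intro Min_le) auto
    then show ?thesis by simp
  qed
  have "\<omega> s = \<omega> \<tau>" if "\<tau> \<le> s" "s < \<tau> + \<delta>" for s
  proof -
    have "{\<tau><..s} \<inter> S = {}" using \<delta>_jump that by force
    then show ?thesis using S(2)[of \<tau> s] assms(2) that \<delta>(2) by simp
  qed
  with \<delta>(1) show ?thesis using that by blast
qed

lemma paths_right_limit:
  assumes \<omega>: "\<omega> \<in> paths a b" and "a \<le> b"
    and h: "h \<longlonglongrightarrow> \<tau>" "\<And>n. \<tau> \<le> h n"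
  shows "eventually (\<lambda>n. \<omega> (h n) = \<omega> \<tau>) sequentially"
proof -
  have cl: "\<And>s. \<omega> s = \<omega> (clamp a b s)" using \<omega> unfolding paths_def by auto
  consider "b \<le> \<tau>" | "\<tau> < a" | "a \<le> \<tau>" "\<tau> < b" by linarith
  then show ?thesis
  proof cases
    case 1
    have "\<omega> (h n) = \<omega> \<tau>" for n
      using h(2)[of n] 1 \<open>a \<le> b\<close> cl[of \<tau>] cl[of "h n"] by (simp add: clamp_def)
    then show ?thesis by simp
  next
    case 2
    have "eventually (\<lambda>n. h n < a) sequentially" by (rule order_tendstoD(2)[OF h(1) 2])
    then show ?thesis
    proof eventually_elim
      case (elim n)
      show ?case using cl[of "h n"] cl[of \<tau>] 2 elim \<open>a \<le> b\<close> by (simp add: clamp_def)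
    qed
  next
    case 3
    then obtain \<delta> where "0 < \<delta>" and const: "\<And>s. \<tau> \<le> s \<Longrightarrow> s < \<tau> + \<delta> \<Longrightarrow> \<omega> s = \<omega> \<tau>"
      using paths_locally_constant_right[OF \<omega>] by blast
    have "eventually (\<lambda>n. h n < \<tau> + \<delta>) sequentially"
      by (rule order_tendstoD(2)[OF h(1)]) (use \<open>0 < \<delta>\<close> in simp)
    then show ?thesis by eventually_elim (use const h(2) in blast)
  qed
qed

lemma dyadic_ceiling_ge: "\<tau> \<le> of_int \<lceil>\<tau> * 2^n\<rceil> / (2::real)^n"
  by (simp add: le_divide_eq)

lemma dyadic_ceiling_le: "of_int \<lceil>\<tau> * 2^n\<rceil> / (2::real)^n \<le> \<tau> + 1 / 2^n"
proof -
  have "of_int \<lceil>\<tau> * 2^n\<rceil> / (2::real)^n \<le> (\<tau> * 2^n + 1) / 2^n"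
    by (rule divide_right_mono) (linarith, simp)
  also have "\<dots> = \<tau> + 1 / 2^n"
    by (simp add: add_divide_distrib)
  finally show ?thesis .
qed

lemma dyadic_ceiling_tendsto: "(\<lambda>n. of_int \<lceil>\<tau> * 2^n\<rceil> / (2::real)^n) \<longlonglongrightarrow> \<tau>"
proof -
  have lower: "\<forall>n. \<tau> \<le> of_int \<lceil>\<tau> * 2^n\<rceil> / (2::real)^n"
    and upper: "\<forall>n. of_int \<lceil>\<tau> * 2^n\<rceil> / (2::real)^n \<le> \<tau> + 1 / 2^n"
    using dyadic_ceiling_ge dyadic_ceiling_le by blast+
  have "(\<lambda>n. \<tau> + 1 / (2::real)^n) \<longlonglongrightarrow> \<tau> + 0"
    by (intro tendsto_add tendsto_const LIMSEQ_divide_realpow_zero) simp_all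
  then show ?thesis
    by (intro tendsto_sandwich[OF always_eventually[OF lower] always_eventually[OF upper] tendsto_const]) simp
qed

lemma space_path_meas[simp]: "space (path_meas a b) = paths a b"
  by (simp add: path_meas_def space_measure_of_conv)

lemma measurable_path_coord:
  assumes "s \<in> {a..b}"
  shows "(\<lambda>\<omega>. \<omega> s) \<in> measurable (path_meas a b) (count_space (UNIV::'x::finite set))"
proof (subst measurable_count_space_eq2_countable, intro conjI ballI)
  fix y :: 'x
  have "(\<lambda>\<omega>. \<omega> s) -` {y} \<inter> space (path_meas a b) = {\<omega> \<in> paths a b. \<omega> s = y}" by auto
  also have "\<dots> \<in> sets (path_meas a b)"
    unfolding path_meas_def by (subst sets_measure_of_conv) (use assms in \<open>auto intro: sigma_sets.Basic\<close>)
  finally show "(\<lambda>\<omega>. \<omega> s) -` {y} \<inter> space (path_meas a b) \<in> sets (path_meas a b)" .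
qed auto

text \<open>The evaluation (\<omega>, \<tau>) \<mapsto> \<omega> \<tau> is the pointwise limit of evaluations at the dyadic
  times right of \<tau>, each of which takes countably many values; right-continuity of paths makes
  the limit eventually constant.\<close>
lemma measurable_path_eval:
  assumes "a \<le> b"
  shows "(\<lambda>p. fst p (snd p)) \<in> measurable (path_meas a b \<Otimes>\<^sub>M lborel) (count_space (UNIV::'x::finite set))"
proof (subst measurable_count_space_eq2_countable, intro conjI ballI)
  fix x :: 'x
  let ?M = "path_meas a b \<Otimes>\<^sub>M lborel :: ((real \<Rightarrow> 'x) \<times> real) measure"
  let ?d = "\<lambda>n (\<tau>::real). of_int \<lceil>\<tau> * 2^n\<rceil> / (2::real)^n"
  have "(indicator {p. fst p (snd p) = x} :: _ \<Rightarrow> real) \<in> borel_measurable ?M"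
  proof (rule borel_measurable_LIMSEQ_real)
    fix p :: "(real \<Rightarrow> 'x) \<times> real" assume "p \<in> space ?M"
    then have p: "fst p \<in> paths a b" by (auto simp: space_pair_measure mem_Times_iff)
    then have cl: "fst p (clamp a b s) = fst p s" for s by (simp add: paths_def)
    have "eventually (\<lambda>n. fst p (?d n (snd p)) = fst p (snd p)) sequentially"
      by (rule paths_right_limit[OF p assms dyadic_ceiling_tendsto dyadic_ceiling_ge])
    then show "(\<lambda>n. indicator {x} (fst p (clamp a b (of_int \<lceil>snd p * 2^n\<rceil> / 2^n))) :: real)
        \<longlonglongrightarrow> indicator {p. fst p (snd p) = x} p"
      by (rule tendsto_eventually[OF eventually_mono]) (auto simp: cl indicator_def)
  next
    fix n :: nat
    let ?F = "\<lambda>(i::int) p. indicator {x} (fst p (clamp a b (of_int i / 2^n))) :: real"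
    have "(\<lambda>p. ?F i p) \<in> borel_measurable ?M" for i
    proof (rule measurable_compose[where g="indicator {x}"])
      show "(\<lambda>p. fst p (clamp a b (of_int i / 2^n))) \<in> measurable ?M (count_space UNIV)"
        by (rule measurable_compose[OF measurable_fst measurable_path_coord])
          (use assms in \<open>simp add: clamp_def\<close>)
    qed simp
    moreover have "(\<lambda>p. \<lceil>snd p * (2::real)^n\<rceil>) \<in> measurable ?M (count_space UNIV)"
      by measurable
    ultimately show "(\<lambda>p. ?F \<lceil>snd p * (2::real)^n\<rceil> p) \<in> borel_measurable ?M"
      by (rule measurable_compose_countable)
  qed
  then show "(\<lambda>p. fst p (snd p)) -` {x} \<inter> space ?M \<in> sets ?M"
    by (simp add: borel_measurable_indicator_iff vimage_def)
qed auto

lemma path_concat_clamp: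
  assumes "\<And>s. \<xi> s = \<xi> (clamp 0 t s)" "\<And>s. \<eta> s = \<eta> (clamp t r s)" "\<eta> t = \<xi> t" "0 \<le> t" "t \<le> r"
  shows "path_concat t \<xi> \<eta> s = path_concat t \<xi> \<eta> (clamp 0 r s)"
proof -
  consider "s \<le> 0" | "0 < s" "s < r" | "r \<le> s" "s \<le> t" | "r \<le> s" "t < s" by linarith
  then show ?thesis
  proof cases
    case 1
    then have "clamp 0 r s = 0" "clamp 0 t s = 0" using assms(4,5) by (auto simp: clamp_def)
    then show ?thesis using 1 assms(1)[of s] assms(4) by (simp add: path_concat_def)
  next
    case 2
    then show ?thesis by (simp add: clamp_def)
  next
    case 3
    then have "s = t" "r = t" using assms(5) by auto
    then show ?thesis using assms(4) by (simp add: clamp_def path_concat_def)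
  next
    case 4
    then have "clamp 0 r s = r" "clamp t r s = r" using assms(4,5) by (auto simp: clamp_def)
    then show ?thesis using 4 assms(2)[of s] assms(3,5) by (cases "r = t") (auto simp: path_concat_def)
  qed
qed

lemma path_concat_in_paths:
  assumes \<xi>: "\<xi> \<in> paths 0 t" and \<eta>: "\<eta> \<in> paths_from t r (\<xi> t)" and "0 \<le> t" "t \<le> r"
  shows "path_concat t \<xi> \<eta> \<in> paths 0 r"
proof -
  from \<xi> obtain S1 where clx: "\<And>s. \<xi> s = \<xi> (clamp 0 t s)" and S1: "finite S1"
    "\<And>\<tau>1 \<tau>2. 0 \<le> \<tau>1 \<Longrightarrow> \<tau>1 \<le> \<tau>2 \<Longrightarrow> \<tau>2 < t \<Longrightarrow> {\<tau>1<..\<tau>2} \<inter> S1 = {} \<Longrightarrow> \<xi> \<tau>1 = \<xi> \<tau>2"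
    unfolding paths_def by blast
  from \<eta> obtain S2 where cle: "\<And>s. \<eta> s = \<eta> (clamp t r s)" and S2: "finite S2"
    "\<And>\<tau>1 \<tau>2. t \<le> \<tau>1 \<Longrightarrow> \<tau>1 \<le> \<tau>2 \<Longrightarrow> \<tau>2 < r \<Longrightarrow> {\<tau>1<..\<tau>2} \<inter> S2 = {} \<Longrightarrow> \<eta> \<tau>1 = \<eta> \<tau>2"
    and start: "\<eta> t = \<xi> t"
    unfolding paths_def paths_from_def by blast
  let ?c = "path_concat t \<xi> \<eta>"
  \<comment> \<open>the jumps of the concatenation are those of \<xi>, those of \<eta>, and possibly t\<close>
  have "?c \<tau>1 = ?c \<tau>2"
    if "0 \<le> \<tau>1" "\<tau>1 \<le> \<tau>2" "\<tau>2 < r" "{\<tau>1<..\<tau>2} \<inter> (S1 \<union> S2 \<union> {t}) = {}" for \<tau>1 \<tau>2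
  proof (cases "\<tau>2 < t")
    case True
    then have "\<xi> \<tau>1 = \<xi> \<tau>2" using S1(2)[of \<tau>1 \<tau>2] that by blast
    then show ?thesis using True that(2) by (simp add: path_concat_def)
  next
    case False
    then have "\<tau>1 = \<tau>2 \<or> t \<le> \<tau>1" using that(2,4) by fastforce
    moreover have "{\<tau>1<..\<tau>2} \<inter> S2 = {}" using that(4) by blast
    ultimately show ?thesis using S2(2)[of \<tau>1 \<tau>2] that False start by (auto simp: path_concat_def)
  qed
  then show ?thesis unfolding paths_def
    using path_concat_clamp[OF clx cle start assms(3,4)] S1(1) S2(1)
    by (intro CollectI conjI allI exI[of _ "S1 \<union> S2 \<union> {t}"]) auto
qed

section \<open>Path integrals\<close>

lemma measurable_Linf_ts_section:
  assumes "c \<in> Linf_ts 0 T" "{a..b} \<subseteq> {0..T}"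
  shows "(\<lambda>\<tau>. indicator {a..b} \<tau> * c \<tau> x) \<in> borel_measurable borel"
proof -
  have "(\<lambda>(\<tau>, x). c \<tau> x) \<in> borel_measurable (restrict_space borel {0..T} \<Otimes>\<^sub>M count_space UNIV)"
    using assms(1) by (simp add: Linf_ts_def)
  moreover have "(\<lambda>\<tau>. (\<tau>, x)) \<in> measurable (restrict_space borel {0..T}) (restrict_space borel {0..T} \<Otimes>\<^sub>M count_space UNIV)"
    by measurable
  ultimately have "(\<lambda>\<tau>. c \<tau> x) \<in> borel_measurable (restrict_space borel {0..T})"
    using measurable_comp by (fastforce simp: comp_def)
  then have "(\<lambda>\<tau>. indicator {0..T} \<tau> *\<^sub>R c \<tau> x) \<in> borel_measurable borel"
    by (subst (asm) borel_measurable_restrict_space_iff) auto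
  then have "(\<lambda>\<tau>. indicator {a..b} \<tau> * (indicator {0..T} \<tau> *\<^sub>R c \<tau> x)) \<in> borel_measurable borel"
    by measurable
  moreover have "(\<lambda>\<tau>. indicator {a..b} \<tau> * (indicator {0..T} \<tau> *\<^sub>R c \<tau> x)) = (\<lambda>\<tau>. indicator {a..b} \<tau> * c \<tau> x)"
    using assms(2) by (auto simp: indicator_def)
  ultimately show ?thesis by simp
qed

lemma measurable_path_integrand:
  fixes c :: "real \<Rightarrow> 'x::finite \<Rightarrow> real"
  assumes "c \<in> Linf_ts 0 T" "a0 \<le> b0" "{a..b} \<subseteq> {0..T}"
  shows "(\<lambda>p. indicator {a..b} (snd p) * c (snd p) (fst p (snd p))) \<in> borel_measurable (path_meas a0 b0 \<Otimes>\<^sub>M lborel)"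
proof -
  have integrand: "(\<lambda>(x, \<tau>). indicator {a..b} \<tau> * c \<tau> x) \<in> borel_measurable (count_space (UNIV :: 'x set) \<Otimes>\<^sub>M lborel)"
  proof (rule measurable_pair_measure_countable1)
    fix x :: 'x
    show "(\<lambda>\<tau>. (\<lambda>(x, \<tau>). indicator {a..b} \<tau> * c \<tau> x) (x, \<tau>)) \<in> borel_measurable lborel"
      unfolding case_prod_conv measurable_lborel2 by (rule measurable_Linf_ts_section[OF assms(1,3)])
  qed simp
  have eval: "(\<lambda>p. (fst p (snd p), snd p)) \<in> measurable (path_meas a0 b0 \<Otimes>\<^sub>M lborel) (count_space (UNIV :: 'x set) \<Otimes>\<^sub>M lborel)"
    by (rule measurable_Pair[OF measurable_path_eval[OF assms(2)] measurable_snd])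
  show ?thesis
    using measurable_compose[OF eval integrand] by (simp only: case_prod_conv)
qed

lemma measurable_path_int:
  fixes c :: "real \<Rightarrow> 'x::finite \<Rightarrow> real"
  assumes "c \<in> Linf_ts 0 T" "a0 \<le> b0" "{a..b} \<subseteq> {0..T}"
  shows "path_int c a b \<in> borel_measurable (path_meas a0 b0)"
proof -
  have "(\<lambda>\<omega>. \<integral>\<tau>. indicator {a..b} \<tau> * c \<tau> (\<omega> \<tau>) \<partial>lborel) \<in> borel_measurable (path_meas a0 b0)"
    using measurable_path_integrand[OF assms]
    by (intro lborel.borel_measurable_lebesgue_integral) (simp add: case_prod_beta)
  then show ?thesis by (simp add: path_int_def[abs_def] set_lebesgue_integral_def)
qed

lemma Linf_ts_AE_bound:
  fixes c :: "real \<Rightarrow> 'x::finite \<Rightarrow> real"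
  assumes "c \<in> Linf_ts 0 T" "{a..b} \<subseteq> {0..T}"
  obtains B where "AE \<tau> in lborel. \<forall>x. \<bar>indicator {a..b} \<tau> * c \<tau> x\<bar> \<le> B * indicator {a..b} \<tau>"
proof -
  obtain B where "\<forall>x. AE \<tau> in lborel. \<tau> \<in> {0..T} \<longrightarrow> \<bar>c \<tau> x\<bar> \<le> B"
    using assms(1) by (auto simp: Linf_ts_def)
  then have "AE \<tau> in lborel. \<forall>x\<in>UNIV. \<tau> \<in> {0..T} \<longrightarrow> \<bar>c \<tau> x\<bar> \<le> B"
    by (intro AE_finite_allI) auto
  then have "AE \<tau> in lborel. \<forall>x. \<bar>indicator {a..b} \<tau> * c \<tau> x\<bar> \<le> B * indicator {a..b} \<tau>"
    by eventually_elim (use assms(2) in \<open>auto simp: indicator_def\<close>)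
  then show ?thesis using that by blast
qed

lemma integrable_path_integrand:
  fixes c :: "real \<Rightarrow> 'x::finite \<Rightarrow> real"
  assumes "c \<in> Linf_ts 0 T" "a0 \<le> b0" "{a..b} \<subseteq> {0..T}" "\<omega> \<in> paths a0 b0"
  shows "integrable lborel (\<lambda>\<tau>. indicator {a..b} \<tau> * c \<tau> (\<omega> \<tau>))"
proof -
  obtain B where B: "AE \<tau> in lborel. \<forall>x. \<bar>indicator {a..b} \<tau> * c \<tau> x\<bar> \<le> B * indicator {a..b} \<tau>"
    using Linf_ts_AE_bound[OF assms(1,3)] by blast
  show ?thesis
  proof (rule Bochner_Integration.integrable_bound)
    show "integrable lborel (\<lambda>\<tau>. B * indicator {a..b} \<tau> :: real)"
      by (intro integrable_mult_right integrable_real_indicator) (auto simp: emeasure_lborel_Icc_eq)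
    show "(\<lambda>\<tau>. indicator {a..b} \<tau> * c \<tau> (\<omega> \<tau>)) \<in> borel_measurable lborel"
      using measurable_Pair2[OF measurable_path_integrand[OF assms(1-3)], of \<omega>] assms(4) by simp
    show "AE \<tau> in lborel. norm (indicator {a..b} \<tau> * c \<tau> (\<omega> \<tau>)) \<le> norm (B * indicator {a..b} \<tau>)"
      using B by eventually_elim (metis abs_ge_self order_trans real_norm_def)
  qed
qed

lemma path_int_bounded:
  fixes c :: "real \<Rightarrow> 'x::finite \<Rightarrow> real"
  assumes "c \<in> Linf_ts 0 T" "{a..b} \<subseteq> {0..T}" "a0 \<le> b0"
  shows "\<exists>K. \<forall>\<omega>\<in>paths a0 b0. \<bar>path_int c a b \<omega>\<bar> \<le> K"
proof -
  obtain B where B: "AE \<tau> in lborel. \<forall>x. \<bar>indicator {a..b} \<tau> * c \<tau> x\<bar> \<le> B * indicator {a..b} \<tau>"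
    using Linf_ts_AE_bound[OF assms(1,2)] by blast
  have ig: "integrable lborel (\<lambda>\<tau>. B * indicator {a..b} \<tau> :: real)"
    by (intro integrable_mult_right integrable_real_indicator) (auto simp: emeasure_lborel_Icc_eq)
  have "\<bar>path_int c a b \<omega>\<bar> \<le> \<bar>B * measure lborel {a..b}\<bar>" if \<omega>: "\<omega> \<in> paths a0 b0" for \<omega> :: "real \<Rightarrow> 'x"
  proof -
    have i: "integrable lborel (\<lambda>\<tau>. indicator {a..b} \<tau> * c \<tau> (\<omega> \<tau>))"
      by (rule integrable_path_integrand[OF assms(1,3,2) \<omega>])
    have B': "AE \<tau> in lborel. \<bar>indicator {a..b} \<tau> * c \<tau> (\<omega> \<tau>)\<bar> \<le> B * indicator {a..b} \<tau>"
      using B by eventually_elim blast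
    have "(\<integral>\<tau>. indicator {a..b} \<tau> * c \<tau> (\<omega> \<tau>) \<partial>lborel) \<le> (\<integral>\<tau>. B * indicator {a..b} \<tau> \<partial>lborel)"
      by (rule integral_mono_AE[OF i ig]) (use B' in \<open>eventually_elim, simp\<close>)
    moreover have "(\<integral>\<tau>. -(B * indicator {a..b} \<tau>) \<partial>lborel) \<le> (\<integral>\<tau>. indicator {a..b} \<tau> * c \<tau> (\<omega> \<tau>) \<partial>lborel)"
      by (rule integral_mono_AE[OF integrable_minus[OF ig] i]) (use B' in \<open>eventually_elim, linarith\<close>)
    ultimately show ?thesis by (simp add: path_int_def set_lebesgue_integral_def)
  qed
  then show ?thesis by blast
qed

lemma path_int_cong:
  assumes "\<And>\<tau>. \<tau> \<in> {a..b} \<Longrightarrow> \<omega> \<tau> = \<omega>' \<tau>"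
  shows "path_int c a b \<omega> = path_int c a b \<omega>'"
proof -
  have "(\<lambda>\<tau>. indicator {a..b} \<tau> *\<^sub>R c \<tau> (\<omega> \<tau>)) = (\<lambda>\<tau>. indicator {a..b} \<tau> *\<^sub>R c \<tau> (\<omega>' \<tau>))"
    using assms by (auto simp: indicator_def)
  then show ?thesis by (simp add: path_int_def set_lebesgue_integral_def)
qed

lemma path_int_split:
  fixes c :: "real \<Rightarrow> 'x::finite \<Rightarrow> real"
  assumes "c \<in> Linf_ts 0 T" "a0 \<le> b0" "\<omega> \<in> paths a0 b0" "0 \<le> a" "a \<le> m" "m \<le> b" "b \<le> T"
  shows "path_int c a b \<omega> = path_int c a m \<omega> + path_int c m b \<omega>"
proof -
  let ?g = "\<lambda>A \<tau>. indicator A \<tau> * c \<tau> (\<omega> \<tau>)"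
  have i: "integrable lborel (?g {a..b})" "integrable lborel (?g {a..m})" "integrable lborel (?g {m..b})"
    using integrable_path_integrand[OF assms(1,2) _ assms(3)] assms by auto
  have "(\<integral>\<tau>. ?g {a..b} \<tau> \<partial>lborel) = (\<integral>\<tau>. ?g {a..m} \<tau> + ?g {m..b} \<tau> \<partial>lborel)"
    \<comment> \<open>the two subintervals overlap only in the null set {m}\<close>
    by (rule integral_cong_AE[OF borel_measurable_integrable[OF i(1)]
          borel_measurable_add[OF borel_measurable_integrable[OF i(2)] borel_measurable_integrable[OF i(3)]]])
      (rule eventually_mono[OF AE_lborel_singleton[of m]], use assms in \<open>auto simp: indicator_def\<close>)
  also have "\<dots> = (\<integral>\<tau>. ?g {a..m} \<tau> \<partial>lborel) + (\<integral>\<tau>. ?g {m..b} \<tau> \<partial>lborel)"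
    by (rule Bochner_Integration.integral_add[OF i(2,3)])
  finally show ?thesis by (simp add: path_int_def set_lebesgue_integral_def)
qed

lemma path_int_path_concat:
  fixes c :: "real \<Rightarrow> 'x::finite \<Rightarrow> real"
  assumes "c \<in> Linf_ts 0 T" "\<xi> \<in> paths 0 t" "\<eta> \<in> paths_from t r (\<xi> t)" "0 \<le> t" "t \<le> r" "r \<le> T"
  shows "path_int c 0 r (path_concat t \<xi> \<eta>) = path_int c 0 t \<xi> + path_int c t r \<eta>"
proof -
  have "path_int c 0 r (path_concat t \<xi> \<eta>)
      = path_int c 0 t (path_concat t \<xi> \<eta>) + path_int c t r (path_concat t \<xi> \<eta>)"
    by (rule path_int_split[OF assms(1) _ path_concat_in_paths[OF assms(2-5)]]) (use assms in auto)
  also have "path_int c 0 t (path_concat t \<xi> \<eta>) = path_int c 0 t \<xi>"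
    by (rule path_int_cong) (auto simp: path_concat_def)
  also have "path_int c t r (path_concat t \<xi> \<eta>) = path_int c t r \<eta>"
    using assms(3) by (intro path_int_cong) (auto simp: path_concat_def paths_from_def)
  finally show ?thesis .
qed

section \<open>Bounded path functionals\<close>

lemma Zsp_cong:
  assumes "Z \<in> Zsp t" "\<And>\<omega>. \<omega> \<in> paths 0 t \<Longrightarrow> Z \<omega> = W \<omega>"
  shows "W \<in> Zsp t"
proof -
  have "Z \<in> borel_measurable (path_meas 0 t)" using assms(1) by (simp add: Zsp_def)
  then have "W \<in> borel_measurable (path_meas 0 t)"
    by (rule measurable_cong[THEN iffD1, rotated]) (use assms(2) in auto)
  moreover obtain B where "\<forall>\<omega>\<in>paths 0 t. \<bar>Z \<omega>\<bar> \<le> B" using assms(1) by (auto simp: Zsp_def)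
  then have "\<forall>\<omega>\<in>paths 0 t. \<bar>W \<omega>\<bar> \<le> B" using assms(2) by auto
  ultimately show ?thesis by (auto simp: Zsp_def)
qed

lemma Zsp_const: "(\<lambda>_. k) \<in> Zsp t"
  by (auto simp: Zsp_def)

lemma Zsp_add:
  assumes "Z \<in> Zsp t" "W \<in> Zsp t"
  shows "(\<lambda>\<omega>. Z \<omega> + W \<omega>) \<in> Zsp t"
proof -
  obtain B C where "\<forall>\<omega>\<in>paths 0 t. \<bar>Z \<omega>\<bar> \<le> B" "\<forall>\<omega>\<in>paths 0 t. \<bar>W \<omega>\<bar> \<le> C"
    using assms by (auto simp: Zsp_def)
  then have "\<forall>\<omega>\<in>paths 0 t. \<bar>Z \<omega> + W \<omega>\<bar> \<le> B + C"
    by (fastforce intro: order_trans[OF abs_triangle_ineq] add_mono)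
  with assms show ?thesis by (auto simp: Zsp_def)
qed

lemma Zsp_path_int:
  fixes c :: "real \<Rightarrow> 'x::finite \<Rightarrow> real"
  assumes "c \<in> Linf_ts 0 T" "0 \<le> s" "{a..b} \<subseteq> {0..T}"
  shows "path_int c a b \<in> Zsp s"
  using measurable_path_int[OF assms] path_int_bounded[OF assms(1,3,2)] by (auto simp: Zsp_def)

lemma Zsp_terminal:
  fixes f :: "'x::finite \<Rightarrow> real"
  assumes "0 \<le> T"
  shows "(\<lambda>\<omega>. f (\<omega> T)) \<in> Zsp T"
proof -
  have "(\<lambda>\<omega>. f (\<omega> T)) \<in> borel_measurable (path_meas 0 T)"
    by (rule measurable_compose[OF measurable_path_coord, where g=f]) (use assms in auto)
  moreover have "\<bar>f x\<bar> \<le> (\<Sum>y\<in>UNIV. \<bar>f y\<bar>)" for x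
    by (rule member_le_sum) auto
  ultimately show ?thesis by (auto simp: Zsp_def)
qed

lemma Zsp_running_cost:
  fixes c :: "real \<Rightarrow> 'x::finite \<Rightarrow> real"
  assumes "c \<in> Linf_ts 0 T" "0 \<le> s" "s \<le> T"
  shows "(\<lambda>\<omega>. path_int c s T \<omega> + f (\<omega> T)) \<in> Zsp T"
  using assms by (intro Zsp_add Zsp_path_int Zsp_terminal) auto


section \<open>Risk of running costs\<close>

lemma translation_invariant_const:
  assumes "translation_invariant T \<rho>" "s \<in> {0..T}" "Z \<in> Zsp T" "\<omega> \<in> paths 0 s"
  shows "\<rho> s (\<lambda>\<omega>. k + Z \<omega>) \<omega> = k + \<rho> s Z \<omega>"
  using assms Zsp_const[of k s] unfolding translation_invariant_def by fastforce

lemma risk_running_cost_split: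
  fixes c :: "real \<Rightarrow> 'x::finite \<Rightarrow> real"
  assumes \<rho>: "dynamic_risk_measure T \<rho>" "translation_invariant T \<rho>"
    and c: "c \<in> Linf_ts 0 T" and s: "0 \<le> s" "s \<le> T" and \<omega>: "\<omega> \<in> paths 0 s"
  shows "\<rho> s (\<lambda>\<omega>. path_int c 0 T \<omega> + f (\<omega> T)) \<omega>
      = path_int c 0 s \<omega> + \<rho> s (\<lambda>\<omega>. path_int c s T \<omega> + f (\<omega> T)) \<omega>"
proof -
  let ?Z = "\<lambda>\<omega>. path_int c 0 T \<omega> + f (\<omega> T)" and ?Z' = "\<lambda>\<omega>. path_int c s T \<omega> + f (\<omega> T)"
  let ?W = "\<lambda>\<omega>. path_int c 0 s (restr 0 s \<omega>) + ?Z' \<omega>"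
  have Z: "?Z \<in> Zsp T" by (rule Zsp_running_cost[OF c]) (use s in auto)
  have Z': "?Z' \<in> Zsp T" by (rule Zsp_running_cost[OF c s])
  have Zs: "path_int c 0 s \<in> Zsp s" by (rule Zsp_path_int[OF c s(1)]) (use s in auto)
  have split: "?Z \<omega>' = ?W \<omega>'" if "\<omega>' \<in> paths 0 T" for \<omega>'
  proof -
    have "path_int c 0 s (restr 0 s \<omega>') = path_int c 0 s \<omega>'"
      by (rule path_int_cong) (auto simp: restr_def clamp_def)
    moreover have "path_int c 0 T \<omega>' = path_int c 0 s \<omega>' + path_int c s T \<omega>'"
      by (rule path_int_split[OF c _ that]) (use s in auto)
    ultimately show ?thesis by simp
  qed
  have "\<rho> s ?Z \<omega> = \<rho> s ?W \<omega>"
    using \<rho>(1)[unfolded dynamic_risk_measure_def, THEN conjunct2, rule_format,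
        OF _ Z Zsp_cong[OF Z split] split \<omega>] s by simp
  also have "\<dots> = path_int c 0 s \<omega> + \<rho> s ?Z' \<omega>"
    using \<rho>(2)[unfolded translation_invariant_def, rule_format, OF _ Zs Z' \<omega>] s by simp
  finally show ?thesis .
qed

lemma stoch_le_if_distr_eq:
  assumes "U \<in> borel_measurable M" "V \<in> borel_measurable M" "distr M borel U = distr M borel V"
  shows "stoch_le M U V"
  unfolding stoch_le_def
proof
  fix e
  have "measure M {x \<in> space M. e < U x} = measure (distr M borel U) {e<..}"
    by (subst measure_distr[OF assms(1)]) (auto intro!: arg_cong[where f="measure M"])
  also have "\<dots> = measure (distr M borel V) {e<..}" using assms(3) by simp
  also have "\<dots> = measure M {x \<in> space M. e < V x}"
    by (subst measure_distr[OF assms(2)]) (auto intro!: arg_cong[where f="measure M"])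
  finally show "measure M {x \<in> space M. e < U x} \<le> measure M {x \<in> space M. e < V x}" by simp
qed

lemma stoch_le_trans: "stoch_le M U V \<Longrightarrow> stoch_le M V W \<Longrightarrow> stoch_le M U W"
  unfolding stoch_le_def by (meson order_trans)

definition transition_risk ::
  "(real \<Rightarrow> real \<Rightarrow> 'x \<Rightarrow> (real \<Rightarrow> 'x) measure) \<Rightarrow> (real \<Rightarrow> ((real \<Rightarrow> 'x) \<Rightarrow> real) \<Rightarrow> ((real \<Rightarrow> 'x) \<Rightarrow> real))
     \<Rightarrow> real \<Rightarrow> real \<Rightarrow> real \<Rightarrow> (real \<Rightarrow> 'x) \<Rightarrow> ((real \<Rightarrow> 'x) \<Rightarrow> real) \<Rightarrow> real" where
  "transition_risk P \<rho> T t r \<xi> V = \<rho> t (SOME Z. Z \<in> Zsp T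
      \<and> stoch_le (P t r (\<xi> t)) (\<lambda>\<eta>. \<rho> r Z (path_concat t \<xi> \<eta>)) V
      \<and> stoch_le (P t r (\<xi> t)) V (\<lambda>\<eta>. \<rho> r Z (path_concat t \<xi> \<eta>))) \<xi>"

lemma transition_risk_law_invariant: "law_invariant (P t r (\<xi> t)) (transition_risk P \<rho> T t r \<xi>)"
  unfolding law_invariant_def
proof (intro ballI impI)
  let ?M = "P t r (\<xi> t)" and ?R = "\<lambda>Z \<eta>. \<rho> r Z (path_concat t \<xi> \<eta>)"
  fix V W assume "V \<in> Linf ?M" "W \<in> Linf ?M" "distr ?M borel V = distr ?M borel W"
  then have "stoch_le ?M V W" "stoch_le ?M W V"
    by (auto simp: Linf_def intro: stoch_le_if_distr_eq)
  then have "(\<lambda>Z. Z \<in> Zsp T \<and> stoch_le ?M (?R Z) V \<and> stoch_le ?M V (?R Z))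
      = (\<lambda>Z. Z \<in> Zsp T \<and> stoch_le ?M (?R Z) W \<and> stoch_le ?M W (?R Z))"
    by (intro ext) (meson stoch_le_trans)
  then show "transition_risk P \<rho> T t r \<xi> V = transition_risk P \<rho> T t r \<xi> W"
    unfolding transition_risk_def by simp
qed

lemma transition_risk_eq:
  assumes tc: "stoch_cond_time_consistent T P \<rho>"
    and tr: "0 \<le> t" "t \<le> r" "r \<le> T" and \<xi>: "\<xi> \<in> paths 0 t" and Z: "Z \<in> Zsp T"
    and V: "\<And>\<eta>. \<eta> \<in> space (P t r (\<xi> t)) \<Longrightarrow> V \<eta> = \<rho> r Z (path_concat t \<xi> \<eta>)"
  shows "transition_risk P \<rho> T t r \<xi> V = \<rho> t Z \<xi>"
proof -
  let ?M = "P t r (\<xi> t)" and ?R = "\<lambda>Z \<eta>. \<rho> r Z (path_concat t \<xi> \<eta>)"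
  define Z' where "Z' = (SOME Z. Z \<in> Zsp T \<and> stoch_le ?M (?R Z) V \<and> stoch_le ?M V (?R Z))"
  have TC: "\<rho> t W \<xi> \<le> \<rho> t W' \<xi>"
    if "W \<in> Zsp T" "W' \<in> Zsp T" "stoch_le ?M (?R W) (?R W')" for W W'
    using tc[unfolded stoch_cond_time_consistent_def, rule_format, OF _ \<xi> that] tr by simp
  have "{\<eta> \<in> space ?M. e < ?R Z \<eta>} = {\<eta> \<in> space ?M. e < V \<eta>}" for e
    using V by auto
  then have RV: "stoch_le ?M (?R Z) V" and VR: "stoch_le ?M V (?R Z)"
    by (simp_all add: stoch_le_def)
  have "Z' \<in> Zsp T \<and> stoch_le ?M (?R Z') V \<and> stoch_le ?M V (?R Z')"
    unfolding Z'_def by (rule someI[of _ Z]) (use Z RV VR in blast)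
  then have Z': "Z' \<in> Zsp T" and "stoch_le ?M (?R Z') V" "stoch_le ?M V (?R Z')"
    by blast+
  then have "\<rho> t Z' \<xi> = \<rho> t Z \<xi>"
    using TC[OF Z' Z stoch_le_trans[OF _ VR]] TC[OF Z Z' stoch_le_trans[OF RV]] by simp
  then show ?thesis by (simp add: transition_risk_def Z'_def)
qed

lemma risk_recentred_after_history:
  fixes c :: "real \<Rightarrow> 'x::finite \<Rightarrow> real"
  assumes \<rho>: "dynamic_risk_measure T \<rho>" "translation_invariant T \<rho>" and c: "c \<in> Linf_ts 0 T"
    and \<xi>: "\<xi> \<in> paths 0 t" and \<eta>: "\<eta> \<in> paths_from t r (\<xi> t)" and tr: "0 \<le> t" "t \<le> r" "r \<le> T"
  shows "\<rho> r (\<lambda>\<omega>. - path_int c 0 t \<xi> + (path_int c 0 T \<omega> + f (\<omega> T))) (path_concat t \<xi> \<eta>)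
      = path_int c t r \<eta> + \<rho> r (\<lambda>\<omega>. path_int c r T \<omega> + f (\<omega> T)) (path_concat t \<xi> \<eta>)"
proof -
  let ?a = "path_int c 0 t \<xi>" and ?Z = "\<lambda>s \<omega>. path_int c s T \<omega> + f (\<omega> T)"
  have cp: "path_concat t \<xi> \<eta> \<in> paths 0 r" by (rule path_concat_in_paths[OF \<xi> \<eta> tr(1,2)])
  have "\<rho> r (\<lambda>\<omega>. - ?a + ?Z 0 \<omega>) (path_concat t \<xi> \<eta>) = - ?a + \<rho> r (?Z 0) (path_concat t \<xi> \<eta>)"
    by (rule translation_invariant_const[OF \<rho>(2) _ Zsp_running_cost[OF c] cp]) (use tr in auto)
  also have "\<rho> r (?Z 0) (path_concat t \<xi> \<eta>)
      = path_int c 0 r (path_concat t \<xi> \<eta>) + \<rho> r (?Z r) (path_concat t \<xi> \<eta>)"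
    by (rule risk_running_cost_split[OF \<rho> c _ _ cp]) (use tr in auto)
  also have "path_int c 0 r (path_concat t \<xi> \<eta>) = ?a + path_int c t r \<eta>"
    by (rule path_int_path_concat[OF c \<xi> \<eta> tr])
  finally show ?thesis by simp
qed

lemma risk_running_cost_transition_risk:
  fixes c :: "real \<Rightarrow> 'x::finite \<Rightarrow> real"
  assumes P: "markov_chain_laws T Q G P" and \<rho>: "dynamic_risk_measure T \<rho>" "translation_invariant T \<rho>"
    and tc: "stoch_cond_time_consistent T P \<rho>" and c: "c \<in> Linf_ts 0 T"
    and tr: "0 \<le> t" "t \<le> r" "r \<le> T" and \<xi>: "\<xi> \<in> paths 0 t"
  shows "\<rho> t (\<lambda>\<omega>. path_int c 0 T \<omega> + f (\<omega> T)) \<xi> = path_int c 0 t \<xi>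
      + transition_risk P \<rho> T t r \<xi> (\<lambda>\<eta>. path_int c t r \<eta> + \<rho> r (\<lambda>\<omega>. path_int c r T \<omega> + f (\<omega> T)) (path_concat t \<xi> \<eta>))"
proof -
  let ?a = "path_int c 0 t \<xi>" and ?Z = "\<lambda>s \<omega>. path_int c s T \<omega> + f (\<omega> T)"
  have space: "space (P t r (\<xi> t)) = paths_from t r (\<xi> t)"
    using P tr unfolding markov_chain_laws_def by auto
  have Z: "(\<lambda>\<omega>. - ?a + ?Z 0 \<omega>) \<in> Zsp T"
    by (rule Zsp_add[OF Zsp_const Zsp_running_cost[OF c]]) (use tr in auto)
  have "transition_risk P \<rho> T t r \<xi> (\<lambda>\<eta>. path_int c t r \<eta> + \<rho> r (?Z r) (path_concat t \<xi> \<eta>))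
      = \<rho> t (\<lambda>\<omega>. - ?a + ?Z 0 \<omega>) \<xi>"
  proof (rule transition_risk_eq[OF tc tr \<xi> Z])
    fix \<eta> assume "\<eta> \<in> space (P t r (\<xi> t))"
    then show "path_int c t r \<eta> + \<rho> r (?Z r) (path_concat t \<xi> \<eta>) = \<rho> r (\<lambda>\<omega>. - ?a + ?Z 0 \<omega>) (path_concat t \<xi> \<eta>)"
      unfolding space by (rule risk_recentred_after_history[OF \<rho> c \<xi> _ tr, symmetric])
  qed
  also have "\<dots> = - ?a + \<rho> t (?Z 0) \<xi>"
    by (rule translation_invariant_const[OF \<rho>(2) _ Zsp_running_cost[OF c] \<xi>]) (use tr in auto)
  finally show ?thesis by simp
qed

theorem theorem4p1:
  fixes T :: real
    and Q :: "real \<Rightarrow> real \<Rightarrow> 'x::finite \<Rightarrow> 'x \<Rightarrow> real"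
    and G :: "real \<Rightarrow> 'x \<Rightarrow> 'x \<Rightarrow> real"
    and P :: "real \<Rightarrow> real \<Rightarrow> 'x \<Rightarrow> (real \<Rightarrow> 'x) measure"
    and \<rho> :: "real \<Rightarrow> ((real \<Rightarrow> 'x) \<Rightarrow> real) \<Rightarrow> ((real \<Rightarrow> 'x) \<Rightarrow> real)"
  assumes "T > 0"
    and "markov_chain_laws T Q G P"
    and "dynamic_risk_measure T \<rho>"
    and "stoch_cond_time_consistent T P \<rho>"
    and "normalized T \<rho>"
    and "translation_invariant T \<rho>"
  shows "\<forall>t r \<xi>. 0 \<le> t \<and> t \<le> r \<and> r \<le> T \<and> \<xi> \<in> paths 0 t \<longrightarrow>
           (\<exists>\<sigma>. law_invariant (P t r (\<xi> t)) \<sigma> \<and>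
              (\<forall>c (f :: 'x \<Rightarrow> real). c \<in> Linf_ts 0 T \<longrightarrow>
                 \<rho> t (\<lambda>\<omega>. path_int c 0 T \<omega> + f (\<omega> T)) \<xi>
                   = path_int c 0 t \<xi>
                     + \<sigma> (\<lambda>\<eta>. path_int c t r \<eta>
                              + \<rho> r (\<lambda>\<omega>. path_int c r T \<omega> + f (\<omega> T)) (path_concat t \<xi> \<eta>))))"
proof (intro allI impI)
  fix t r and \<xi> :: "real \<Rightarrow> 'x"
  assume "0 \<le> t \<and> t \<le> r \<and> r \<le> T \<and> \<xi> \<in> paths 0 t"
  then show "\<exists>\<sigma>. law_invariant (P t r (\<xi> t)) \<sigma> \<and>
          (\<forall>c (f :: 'x \<Rightarrow> real). c \<in> Linf_ts 0 T \<longrightarrow>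
             \<rho> t (\<lambda>\<omega>. path_int c 0 T \<omega> + f (\<omega> T)) \<xi>
               = path_int c 0 t \<xi>
                 + \<sigma> (\<lambda>\<eta>. path_int c t r \<eta>
                          + \<rho> r (\<lambda>\<omega>. path_int c r T \<omega> + f (\<omega> T)) (path_concat t \<xi> \<eta>)))"
    using risk_running_cost_transition_risk[OF assms(2,3,6,4)] transition_risk_law_invariant by blast
qed

end
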